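(* For one-sided matching with $n$ agents and $n$ items and unrestricted nonnegative valuations, there are deterministic algorithms achieving each of the following: (i) distortion $O(n)$ using one value query per agent; (ii) for any constant integer $k\ge1$, distortion $O(n^{1/k})$ using $O(\log n)$ queries per agent; (iii) distortion $O(1)$ using $O(\log^2 n)$ queries per agent.
   Context: One-sided matching: there is a set $N$ of $n$ agents and a set $A$ of $n$ items. Each agent $i$ has a valuation function $v_i:A\to\mathbb{R}_{\ge0}$. The algorithm receives the agents' rankings of the items consistent with their values (if $a\succ_i b$ then $v_i(a)\ge v_i(b)$). It may ask value queries returning $v_i(j)$, and it outputs a perfect matching (bijection $N\to A$). Its distortion is the worst case, over all valuation profiles, of the optimal social welfare $\max_Z\sum_i v_i(z_i)$ divided by the social welfare $\sum_i v_i(y_i)$ of the output matching. *)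

theory Defs
  imports Complex_Main
begin

text \<open>Agents and items are both \<open>{0..<n}\<close>. A valuation profile is
  \<open>v :: nat \<Rightarrow> nat \<Rightarrow> real\<close>, where \<open>v i j\<close> is agent i's value for item j.
  A ranking profile \<open>\<sigma>\<close> gives for each agent i a bijection \<open>\<sigma> i\<close> from positions
  to items (\<open>\<sigma> i 0\<close> is the top item).\<close>

definition valid_valuation :: "nat \<Rightarrow> (nat \<Rightarrow> nat \<Rightarrow> real) \<Rightarrow> bool" where
  "valid_valuation n v \<longleftrightarrow> (\<forall>i<n. \<forall>j<n. 0 \<le> v i j)"

definition consistent_ranking :: "nat \<Rightarrow> (nat \<Rightarrow> nat \<Rightarrow> real) \<Rightarrow> (nat \<Rightarrow> nat \<Rightarrow> nat) \<Rightarrow> bool" where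
  "consistent_ranking n v \<sigma> \<longleftrightarrow>
     (\<forall>i<n. bij_betw (\<sigma> i) {0..<n} {0..<n} \<and>
            (\<forall>p q. p < q \<and> q < n \<longrightarrow> v i (\<sigma> i q) \<le> v i (\<sigma> i p)))"

definition is_matching :: "nat \<Rightarrow> (nat \<Rightarrow> nat) \<Rightarrow> bool" where
  "is_matching n m \<longleftrightarrow> bij_betw m {0..<n} {0..<n}"

definition social_welfare :: "nat \<Rightarrow> (nat \<Rightarrow> nat \<Rightarrow> real) \<Rightarrow> (nat \<Rightarrow> nat) \<Rightarrow> real" where
  "social_welfare n v m = (\<Sum>i<n. v i (m i))"

definition opt_welfare :: "nat \<Rightarrow> (nat \<Rightarrow> nat \<Rightarrow> real) \<Rightarrow> real" where
  "opt_welfare n v = Max {social_welfare n v m | m. is_matching n m}"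

text \<open>Deterministic adaptive value-query algorithms as decision trees:
  either output a matching, or query \<open>v i j\<close> and continue depending on the answer.\<close>

datatype qalg = Output "nat \<Rightarrow> nat" | Query nat nat "real \<Rightarrow> qalg"

primrec run :: "qalg \<Rightarrow> (nat \<Rightarrow> nat \<Rightarrow> real) \<Rightarrow> (nat \<Rightarrow> nat)" where
  "run (Output m) v = m"
| "run (Query i j f) v = run (f (v i j)) v"

primrec queries :: "qalg \<Rightarrow> (nat \<Rightarrow> nat \<Rightarrow> real) \<Rightarrow> (nat \<times> nat) list" where
  "queries (Output m) v = []"
| "queries (Query i j f) v = (i, j) # queries (f (v i j)) v"

definition queries_to :: "qalg \<Rightarrow> (nat \<Rightarrow> nat \<Rightarrow> real) \<Rightarrow> nat \<Rightarrow> nat" where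
  "queries_to t v i = length (filter (\<lambda>q. fst q = i) (queries t v))"

text \<open>An algorithm for size n maps the ranking profile to a decision tree.\<close>

definition achieves :: "nat \<Rightarrow> ((nat \<Rightarrow> nat \<Rightarrow> nat) \<Rightarrow> qalg) \<Rightarrow> real \<Rightarrow> real \<Rightarrow> bool" where
  "achieves n A d q \<longleftrightarrow>
     (\<forall>v \<sigma>. valid_valuation n v \<and> consistent_ranking n v \<sigma> \<longrightarrow>
        is_matching n (run (A \<sigma>) v) \<and>
        opt_welfare n v \<le> d * social_welfare n v (run (A \<sigma>) v) \<and>
        (\<forall>i. real (queries_to (A \<sigma>) v i) \<le> q))"

end

theory Submission
  imports Defs "HOL-Library.FuncSet" "HOL-Library.Log_Nat" "HOL-Combinatorics.Transposition"
begin

(* Every algorithm first queries the value y_i of each agent's top item.  For distortion n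
   this suffices: the agent with the largest y_i gets its top item, and OPT \<le> \<Sum> y_i.
   Otherwise each agent also locates, by binary search in its ranking with log n queries
   each, the boundaries of the value classes [y_i / b^(l+1), y_i / b^l) for l \<le> S.
   Rounding every value down to its class bound loses a factor b, up to an additive error
   y_i / b^S per agent; once b^S \<ge> 2n these errors sum to at most OPT / 2, so a
   max-weight matching for the rounded values has distortion 2b.  Taking b = n^(1/k),
   S = k + 1 gives distortion O(n^(1/k)) with O(log n) queries, and b = 2, S = log n + 2
   gives constant distortion with O(log^2 n) queries. *)

section \<open>Matchings and welfare\<close>

lemma is_matching_lt: "is_matching n m \<Longrightarrow> i < n \<Longrightarrow> m i < n"
  unfolding is_matching_def using bij_betwE by fastforce

lemma is_matching_transpose: "a < n \<Longrightarrow> c < n \<Longrightarrow> is_matching n (transpose a c)"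
  unfolding is_matching_def by simp

lemma social_welfare_restrict: "social_welfare n v (restrict m {0..<n}) = social_welfare n v m"
  unfolding social_welfare_def by (intro sum.cong) auto

lemma finite_welfare_values: "finite {social_welfare n v m | m. is_matching n m}"
proof (rule finite_subset)
  show "{social_welfare n v m | m. is_matching n m} \<subseteq> social_welfare n v ` ({0..<n} \<rightarrow>\<^sub>E {0..<n})"
  proof
    fix x assume "x \<in> {social_welfare n v m | m. is_matching n m}"
    then obtain m where "is_matching n m" "x = social_welfare n v m" by blast
    then show "x \<in> social_welfare n v ` ({0..<n} \<rightarrow>\<^sub>E {0..<n})"
      using is_matching_lt social_welfare_restrict
      by (intro image_eqI[of _ _ "restrict m {0..<n}"]) auto
  qed
qed (simp add: finite_PiE)

lemma welfare_le_opt_welfare: "is_matching n m \<Longrightarrow> social_welfare n v m \<le> opt_welfare n v"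
  unfolding opt_welfare_def by (rule Max_ge[OF finite_welfare_values]) blast

lemma opt_welfare_attained: "\<exists>Z. is_matching n Z \<and> opt_welfare n v = social_welfare n v Z"
proof -
  have "is_matching n id" unfolding is_matching_def by simp
  then show ?thesis
    using Max_in[OF finite_welfare_values, of n v] unfolding opt_welfare_def by blast
qed

definition max_weight_matching :: "nat \<Rightarrow> (nat \<Rightarrow> nat \<Rightarrow> real) \<Rightarrow> nat \<Rightarrow> nat" where
  "max_weight_matching n w = (SOME m. is_matching n m \<and> opt_welfare n w = social_welfare n w m)"

lemma max_weight_matching:
  "is_matching n (max_weight_matching n w)"
  "opt_welfare n w = social_welfare n w (max_weight_matching n w)"
  using someI_ex[OF opt_welfare_attained[of n w]] unfolding max_weight_matching_def by auto

lemma value_le_social_welfare: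
  "valid_valuation n v \<Longrightarrow> is_matching n m \<Longrightarrow> i < n \<Longrightarrow> v i (m i) \<le> social_welfare n v m"
  unfolding social_welfare_def
  by (rule member_le_sum[where f = "\<lambda>i. v i (m i)"]) (auto simp: valid_valuation_def is_matching_lt)

lemma social_welfare_nonneg: "valid_valuation n v \<Longrightarrow> is_matching n m \<Longrightarrow> 0 \<le> social_welfare n v m"
  unfolding social_welfare_def by (rule sum_nonneg) (auto simp: valid_valuation_def is_matching_lt)

lemma value_le_opt_welfare:
  assumes "valid_valuation n v" "i < n" "j < n"
  shows "v i j \<le> opt_welfare n v"
proof -
  have m: "is_matching n (transpose i j)" using assms by (simp add: is_matching_transpose)
  have "v i j = v i (transpose i j i)" by simp
  also have "\<dots> \<le> social_welfare n v (transpose i j)" using value_le_social_welfare assms m by blast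
  also have "\<dots> \<le> opt_welfare n v" using welfare_le_opt_welfare[OF m] .
  finally show ?thesis .
qed

lemma opt_welfare_le_sum_bounds:
  assumes "\<And>i j. i < n \<Longrightarrow> j < n \<Longrightarrow> v i j \<le> t i"
  shows "opt_welfare n v \<le> (\<Sum>i<n. t i)"
proof -
  obtain Z where Z: "is_matching n Z" "opt_welfare n v = social_welfare n v Z"
    using opt_welfare_attained by blast
  show ?thesis
    unfolding Z(2) social_welfare_def by (rule sum_mono) (simp add: assms is_matching_lt[OF Z(1)])
qed

lemma sum_div_le_half_opt_welfare:
  assumes val: "valid_valuation n v" and a: "\<And>i. i < n \<Longrightarrow> a i < n"
    and B: "0 < B" "2 * real n \<le> B"
  shows "(\<Sum>i<n. v i (a i) / B) \<le> opt_welfare n v / 2"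
proof -
  have opt: "0 \<le> opt_welfare n v"
    using opt_welfare_attained[of n v] social_welfare_nonneg[OF val] by auto
  have "(\<Sum>i<n. v i (a i) / B) \<le> (\<Sum>i<n. opt_welfare n v / B)"
    using value_le_opt_welfare[OF val] a B(1) by (intro sum_mono divide_right_mono) auto
  also have "\<dots> = real n * opt_welfare n v / B" by simp
  also have "\<dots> \<le> opt_welfare n v / 2"
  proof -
    have "2 * real n * opt_welfare n v \<le> B * opt_welfare n v"
      using B(2) opt by (rule mult_right_mono)
    then show ?thesis using B(1) by (simp add: field_simps)
  qed
  finally show ?thesis .
qed

lemma max_weight_matching_approx:
  assumes approx: "\<And>i j. i < n \<Longrightarrow> j < n \<Longrightarrow> w i j \<le> v i j \<and> v i j - e i \<le> b * w i j"
    and b: "0 \<le> b"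
  shows "opt_welfare n v - (\<Sum>i<n. e i) \<le> b * social_welfare n v (max_weight_matching n w)"
proof -
  define M where "M = max_weight_matching n w"
  obtain Z where Z: "is_matching n Z" "opt_welfare n v = social_welfare n v Z"
    using opt_welfare_attained by blast
  have "opt_welfare n v - (\<Sum>i<n. e i) = (\<Sum>i<n. v i (Z i) - e i)"
    unfolding Z(2) social_welfare_def by (simp add: sum_subtractf)
  also have "\<dots> \<le> (\<Sum>i<n. b * w i (Z i))"
    by (rule sum_mono) (use approx is_matching_lt[OF Z(1)] in auto)
  also have "\<dots> = b * social_welfare n w Z" by (simp add: social_welfare_def sum_distrib_left)
  also have "\<dots> \<le> b * social_welfare n w M"
    using welfare_le_opt_welfare[OF Z(1)] max_weight_matching(2) b unfolding M_def
    by (simp add: mult_left_mono)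
  also have "\<dots> \<le> b * social_welfare n v M"
    using approx is_matching_lt[OF max_weight_matching(1)] b unfolding M_def social_welfare_def
    by (intro mult_left_mono sum_mono) auto
  finally show ?thesis unfolding M_def .
qed

lemma consistent_ranking_top:
  assumes "consistent_ranking n v \<sigma>" "i < n"
  shows "\<sigma> i 0 < n" "j < n \<Longrightarrow> v i j \<le> v i (\<sigma> i 0)"
proof -
  have bij: "bij_betw (\<sigma> i) {0..<n} {0..<n}"
    and mono: "\<And>p q. p < q \<Longrightarrow> q < n \<Longrightarrow> v i (\<sigma> i q) \<le> v i (\<sigma> i p)"
    using assms unfolding consistent_ranking_def by auto
  show "\<sigma> i 0 < n" using bij_betwE[OF bij] assms(2) by fastforce
  assume "j < n"
  then obtain p where "p < n" "j = \<sigma> i p" using bij_betw_imp_surj_on[OF bij] by force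
  then show "v i j \<le> v i (\<sigma> i 0)" using mono[of 0 p] by (cases p) auto
qed

section \<open>Composing query algorithms\<close>

definition query_count :: "(nat \<times> nat) list \<Rightarrow> nat \<Rightarrow> nat" where
  "query_count qs i = length (filter (\<lambda>q. fst q = i) qs)"

lemma query_count_simps [simp]:
  "query_count [] i = 0"
  "query_count (q # qs) i = (if fst q = i then Suc (query_count qs i) else query_count qs i)"
  "query_count (qs @ rs) i = query_count qs i + query_count rs i"
  by (simp_all add: query_count_def)

text \<open>Algorithms are assembled from fragments \<open>P :: ('r \<Rightarrow> qalg) \<Rightarrow> qalg\<close> in
  continuation-passing style. \<open>realises v P \<Phi> c\<close> says that on the valuation \<open>v\<close>,
  \<open>P k\<close> behaves like \<open>k x\<close> for some result \<open>x\<close> satisfying \<open>\<Phi>\<close>, after a prefix of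
  queries containing at most \<open>c j\<close> queries to agent \<open>j\<close>.\<close>

definition realises ::
    "(nat \<Rightarrow> nat \<Rightarrow> real) \<Rightarrow> (('r \<Rightarrow> qalg) \<Rightarrow> qalg) \<Rightarrow> ('r \<Rightarrow> bool) \<Rightarrow> (nat \<Rightarrow> nat) \<Rightarrow> bool" where
  "realises v P \<Phi> c \<longleftrightarrow>
     (\<forall>k. \<exists>x qs. \<Phi> x \<and> run (P k) v = run (k x) v \<and> queries (P k) v = qs @ queries (k x) v \<and>
                (\<forall>j. query_count qs j \<le> c j))"

lemma realises_weaken:
  "realises v P \<Phi> c \<Longrightarrow> (\<And>x. \<Phi> x \<Longrightarrow> \<Psi> x) \<Longrightarrow> (\<And>j. c j \<le> d j) \<Longrightarrow> realises v P \<Psi> d"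
  unfolding realises_def by (meson order_trans)

lemma realises_return: "\<Phi> x \<Longrightarrow> realises v (\<lambda>k. k x) \<Phi> c"
  unfolding realises_def by (intro allI exI[of _ x] exI[of _ "[]"]) simp

lemma realises_single_Query: "realises v (Query i j) (\<lambda>y. y = v i j) (\<lambda>l. if l = i then 1 else 0)"
  unfolding realises_def by (intro allI exI[of _ "v i j"] exI[of _ "[(i, j)]"]) simp

lemma realises_bind:
  assumes P: "realises v P \<Phi> c" and Q: "\<And>x. \<Phi> x \<Longrightarrow> realises v (Q x) \<Psi> d"
  shows "realises v (\<lambda>k. P (\<lambda>x. Q x k)) \<Psi> (\<lambda>j. c j + d j)"
  unfolding realises_def
proof
  fix k
  obtain x qs where x: "\<Phi> x" "run (P (\<lambda>x. Q x k)) v = run (Q x k) v"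
      "queries (P (\<lambda>x. Q x k)) v = qs @ queries (Q x k) v" "\<forall>j. query_count qs j \<le> c j"
    using P unfolding realises_def by blast
  obtain y rs where y: "\<Psi> y" "run (Q x k) v = run (k y) v"
      "queries (Q x k) v = rs @ queries (k y) v" "\<forall>j. query_count rs j \<le> d j"
    using Q[OF x(1)] unfolding realises_def by blast
  show "\<exists>y qs. \<Psi> y \<and> run (P (\<lambda>x. Q x k)) v = run (k y) v \<and>
      queries (P (\<lambda>x. Q x k)) v = qs @ queries (k y) v \<and> (\<forall>j. query_count qs j \<le> c j + d j)"
    using x y by (intro exI[of _ y] exI[of _ "qs @ rs"]) (simp add: add_mono)
qed

lemma realises_Query:
  assumes "realises v (f (v i j)) \<Phi> c" and "\<And>l. (if l = i then 1 else 0) + c l \<le> d l"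
  shows "realises v (\<lambda>k. Query i j (\<lambda>y. f y k)) \<Phi> d"
proof -
  have "realises v (\<lambda>k. Query i j (\<lambda>y. f y k)) \<Phi> (\<lambda>l. (if l = i then 1 else 0) + c l)"
    using assms(1) by (intro realises_bind[OF realises_single_Query]) simp
  then show ?thesis by (rule realises_weaken) (simp_all add: assms(2))
qed

lemma realises_map:
  "realises v P \<Phi> c \<Longrightarrow> realises v (\<lambda>k. P (\<lambda>x. k (g x))) (\<lambda>y. \<exists>x. \<Phi> x \<and> y = g x) c"
  unfolding realises_def by blast

primrec seq_all :: "(nat \<Rightarrow> ('r \<Rightarrow> qalg) \<Rightarrow> qalg) \<Rightarrow> nat \<Rightarrow> ((nat \<Rightarrow> 'r) \<Rightarrow> qalg) \<Rightarrow> qalg" where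
  "seq_all P 0 k = k (\<lambda>_. undefined)"
| "seq_all P (Suc m) k = seq_all P m (\<lambda>R. P m (\<lambda>x. k (R(m := x))))"

lemma realises_seq_all:
  assumes "\<And>l. l < m \<Longrightarrow> realises v (P l) (\<Phi> l) (c l)"
  shows "realises v (seq_all P m) (\<lambda>R. \<forall>l<m. \<Phi> l (R l)) (\<lambda>j. \<Sum>l<m. c l j)"
  using assms
proof (induction m)
  case 0
  show ?case by (simp add: realises_return)
next
  case (Suc m)
  have "realises v (seq_all P m) (\<lambda>R. \<forall>l<m. \<Phi> l (R l)) (\<lambda>j. \<Sum>l<m. c l j)"
    using Suc by simp
  moreover have "realises v (\<lambda>k. P m (\<lambda>x. k (R(m := x)))) (\<lambda>R'. \<forall>l<Suc m. \<Phi> l (R' l)) (c m)"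
    if "\<forall>l<m. \<Phi> l (R l)" for R
  proof -
    have "realises v (\<lambda>k. P m (\<lambda>x. k (R(m := x)))) (\<lambda>R'. \<exists>x. \<Phi> m x \<and> R' = R(m := x)) (c m)"
      using Suc.prems by (intro realises_map) simp
    then show ?thesis by (rule realises_weaken) (use that in \<open>auto simp: less_Suc_eq\<close>)
  qed
  ultimately have "realises v (\<lambda>k. seq_all P m (\<lambda>R. P m (\<lambda>x. k (R(m := x)))))
      (\<lambda>R. \<forall>l<Suc m. \<Phi> l (R l)) (\<lambda>j. (\<Sum>l<m. c l j) + c m j)"
    by (rule realises_bind)
  then show ?case by simp
qed

lemma realises_seq_all_agents:
  assumes "\<And>l. l < m \<Longrightarrow> realises v (P l) (\<Phi> l) (\<lambda>j. if j = l then c else 0)"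
  shows "realises v (seq_all P m) (\<lambda>R. \<forall>l<m. \<Phi> l (R l)) (\<lambda>_. c)"
proof (rule realises_weaken[OF realises_seq_all[OF assms]])
  show "(\<Sum>l<m. if j = l then c else 0) \<le> c" for j by simp
qed

lemma realises_Output:
  assumes "realises v P \<Phi> c"
  obtains x where "\<Phi> x" "run (P (\<lambda>x. Output (f x))) v = f x"
    "\<And>j. queries_to (P (\<lambda>x. Output (f x))) v j \<le> c j"
proof -
  obtain x qs where "\<Phi> x" "run (P (\<lambda>x. Output (f x))) v = f x"
      "queries (P (\<lambda>x. Output (f x))) v = qs" "\<forall>j. query_count qs j \<le> c j"
    using assms unfolding realises_def by (metis append.right_neutral queries.simps(1) run.simps(1))
  then show ?thesis using that unfolding queries_to_def query_count_def by blast
qed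

section \<open>Estimating values by thresholds\<close>

text \<open>Binary search in the ranking \<open>s\<close> of agent \<open>i\<close> for the number of items worth
  at least \<open>th\<close>, knowing that this number lies between \<open>lo\<close> and \<open>hi\<close>.\<close>

function threshold_search :: "nat \<Rightarrow> (nat \<Rightarrow> nat) \<Rightarrow> real \<Rightarrow> nat \<Rightarrow> nat \<Rightarrow> (nat \<Rightarrow> qalg) \<Rightarrow> qalg" where
  "threshold_search i s th lo hi k =
     (if hi \<le> lo then k lo
      else Query i (s ((lo + hi) div 2)) (\<lambda>y.
        if y < th then threshold_search i s th lo ((lo + hi) div 2) k
        else threshold_search i s th (Suc ((lo + hi) div 2)) hi k))"
  by pat_completeness auto
termination by (relation "measure (\<lambda>(i, s, th, lo, hi, k). hi - lo)") auto

declare threshold_search.simps [simp del]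

lemma realises_threshold_search_found:
  assumes "hi \<le> lo" "\<forall>q<lo. th \<le> v i (s q)" "\<forall>q. hi \<le> q \<longrightarrow> q < n \<longrightarrow> v i (s q) < th"
  shows "realises v (threshold_search i s th lo hi) (\<lambda>c. \<forall>q<n. q < c \<longleftrightarrow> th \<le> v i (s q)) d"
proof -
  have "threshold_search i s th lo hi = (\<lambda>k. k lo)"
    using assms(1) by (simp add: fun_eq_iff threshold_search.simps)
  moreover have "\<forall>q<n. q < lo \<longleftrightarrow> th \<le> v i (s q)"
    using assms by (metis le_trans linorder_not_le)
  ultimately show ?thesis by (simp add: realises_return)
qed

lemma realises_threshold_search:
  assumes mono: "\<And>p q. p < q \<Longrightarrow> q < n \<Longrightarrow> v i (s q) \<le> v i (s p)"
    and "lo \<le> hi" "hi \<le> n" "hi - lo < 2 ^ L"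
    and "\<forall>q<lo. th \<le> v i (s q)" "\<forall>q. hi \<le> q \<longrightarrow> q < n \<longrightarrow> v i (s q) < th"
  shows "realises v (threshold_search i s th lo hi) (\<lambda>c. \<forall>q<n. q < c \<longleftrightarrow> th \<le> v i (s q))
           (\<lambda>j. if j = i then L else 0)"
proof -
  let ?\<Phi> = "\<lambda>c. \<forall>q<n. q < c \<longleftrightarrow> th \<le> v i (s q)"
  show ?thesis
    using assms(2-)
  proof (induction L arbitrary: lo hi)
    case 0
    then show ?case by (intro realises_threshold_search_found) auto
  next
    case (Suc L)
    show ?case
    proof (cases "hi \<le> lo")
      case True
      then show ?thesis using Suc.prems by (intro realises_threshold_search_found) auto
    next
      case False
      define mid where "mid = (lo + hi) div 2"
      define f where "f y k = (if y < th then threshold_search i s th lo mid k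
                               else threshold_search i s th (Suc mid) hi k)" for y k
      have unfold: "threshold_search i s th lo hi = (\<lambda>k. Query i (s mid) (\<lambda>y. f y k))"
        using False by (simp add: fun_eq_iff threshold_search.simps mid_def f_def)
      have mid: "lo \<le> mid" "mid < hi" "mid - lo < 2 ^ L" "hi - Suc mid < 2 ^ L"
        using False Suc.prems(3) unfolding mid_def by auto
      have "realises v (f (v i (s mid))) ?\<Phi> (\<lambda>j. if j = i then L else 0)"
      proof (cases "v i (s mid) < th")
        case True
        have "\<forall>q. mid \<le> q \<longrightarrow> q < n \<longrightarrow> v i (s q) < th"
          using True mono by (metis order.strict_trans1 order_le_less)
        moreover have "f (v i (s mid)) = threshold_search i s th lo mid"
          using True by (simp add: fun_eq_iff f_def)
        ultimately show ?thesis using Suc mid by simp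
      next
        case False
        have "\<forall>q<Suc mid. th \<le> v i (s q)"
          using False mono mid Suc.prems(2) by (metis less_Suc_eq not_less order_trans order.strict_trans)
        moreover have "f (v i (s mid)) = threshold_search i s th (Suc mid) hi"
          using False by (simp add: fun_eq_iff f_def)
        ultimately show ?thesis using Suc mid by simp
      qed
      then show ?thesis unfolding unfold by (rule realises_Query) simp
    qed
  qed
qed

definition agent_probe ::
    "nat \<Rightarrow> real \<Rightarrow> nat \<Rightarrow> (nat \<Rightarrow> nat) \<Rightarrow> nat \<Rightarrow> (real \<times> (nat \<Rightarrow> nat) \<Rightarrow> qalg) \<Rightarrow> qalg" where
  "agent_probe n b S s i = (\<lambda>k. Query i (s 0) (\<lambda>y.
     seq_all (\<lambda>l. threshold_search i s (y / b ^ l) 0 n) (Suc S) (\<lambda>cs. k (y, cs))))"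

definition probe_result ::
    "(nat \<Rightarrow> nat \<Rightarrow> real) \<Rightarrow> nat \<Rightarrow> real \<Rightarrow> nat \<Rightarrow> (nat \<Rightarrow> nat) \<Rightarrow> nat \<Rightarrow> real \<times> (nat \<Rightarrow> nat) \<Rightarrow> bool" where
  "probe_result v n b S s i r \<longleftrightarrow>
     fst r = v i (s 0) \<and> (\<forall>l\<le>S. \<forall>q<n. q < snd r l \<longleftrightarrow> fst r / b ^ l \<le> v i (s q))"

lemma realises_agent_probe:
  assumes mono: "\<And>p q. p < q \<Longrightarrow> q < n \<Longrightarrow> v i (s q) \<le> v i (s p)" and "n < 2 ^ L"
  shows "realises v (agent_probe n b S s i) (probe_result v n b S s i)
           (\<lambda>j. if j = i then Suc (Suc S * L) else 0)"
proof -
  define y where "y = v i (s 0)"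
  have "realises v (seq_all (\<lambda>l. threshold_search i s (y / b ^ l) 0 n) (Suc S))
          (\<lambda>cs. \<forall>l<Suc S. \<forall>q<n. q < cs l \<longleftrightarrow> y / b ^ l \<le> v i (s q))
          (\<lambda>j. \<Sum>l<Suc S. if j = i then L else 0)"
    using assms by (intro realises_seq_all realises_threshold_search) auto
  then have "realises v (\<lambda>k. seq_all (\<lambda>l. threshold_search i s (y / b ^ l) 0 n) (Suc S) (\<lambda>cs. k (y, cs)))
          (\<lambda>r. \<exists>cs. (\<forall>l<Suc S. \<forall>q<n. q < cs l \<longleftrightarrow> y / b ^ l \<le> v i (s q)) \<and> r = (y, cs))
          (\<lambda>j. if j = i then Suc S * L else 0)"
    by (rule realises_map[THEN realises_weaken]) auto
  then have "realises v (agent_probe n b S s i)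
          (\<lambda>r. \<exists>cs. (\<forall>l<Suc S. \<forall>q<n. q < cs l \<longleftrightarrow> y / b ^ l \<le> v i (s q)) \<and> r = (y, cs))
          (\<lambda>j. if j = i then Suc (Suc S * L) else 0)"
    unfolding agent_probe_def y_def
    by (rule realises_Query[where f = "\<lambda>y k. seq_all (\<lambda>l. threshold_search i s (y / b ^ l) 0 n) (Suc S) (\<lambda>cs. k (y, cs))"]) simp
  then show ?thesis
    by (rule realises_weaken) (auto simp: probe_result_def y_def less_Suc_eq_le)
qed

lemma geometric_rounding:
  fixes b x y :: real
  assumes b: "1 \<le> b" and x: "0 \<le> x" "x \<le> y" and P: "\<And>l. l \<le> S \<Longrightarrow> P l \<longleftrightarrow> y / b ^ l \<le> x"
  defines "r \<equiv> if \<exists>l\<le>S. P l then y / b ^ (LEAST l. P l) else 0"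
  shows "r \<le> x" "x - y / b ^ S \<le> b * r"
proof -
  have yS: "0 \<le> y / b ^ S" using b x by simp
  have "r \<le> x \<and> x - y / b ^ S \<le> b * r"
  proof (cases "\<exists>l\<le>S. P l")
    case True
    define l0 where "l0 = (LEAST l. P l)"
    obtain l where "l \<le> S" "P l" using True by blast
    then have l0: "P l0" "l0 \<le> S" unfolding l0_def by (auto intro: LeastI Least_le order_trans)
    have r: "r = y / b ^ l0" unfolding r_def l0_def using True by simp
    have "x \<le> b * (y / b ^ l0)"
    proof (cases l0)
      case 0
      then show ?thesis using b x by (simp add: mult_right_mono order_trans[OF _ mult_right_mono[of 1 b y]])
    next
      case (Suc l1)
      then have "\<not> P l1" using not_less_Least[of l1 P] unfolding l0_def by simp
      then have "x < y / b ^ l1" using P[of l1] Suc l0(2) by simp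
      also have "y / b ^ l1 = b * (y / b ^ l0)" using b Suc by simp
      finally show ?thesis by simp
    qed
    then show ?thesis using P l0 yS unfolding r by auto
  next
    case False
    then have "x < y / b ^ S" using P[of S] by auto
    moreover have "r = 0" using False unfolding r_def by (rule if_not_P)
    ultimately show ?thesis using x by simp
  qed
  then show "r \<le> x" "x - y / b ^ S \<le> b * r" by auto
qed

text \<open>Item \<open>j\<close> sits at position \<open>p\<close> of the ranking \<open>s\<close>; it is estimated by the largest
  threshold \<open>y / b ^ l\<close> (\<open>l \<le> S\<close>) it reaches, and by \<open>0\<close> if it reaches none.\<close>

definition estimate :: "nat \<Rightarrow> real \<Rightarrow> nat \<Rightarrow> (nat \<Rightarrow> nat) \<Rightarrow> real \<times> (nat \<Rightarrow> nat) \<Rightarrow> nat \<Rightarrow> real" where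
  "estimate n b S s r j = (let p = inv_into {0..<n} s j in
     if \<exists>l\<le>S. p < snd r l then fst r / b ^ (LEAST l. p < snd r l) else 0)"

lemma estimate_approx:
  assumes b: "1 \<le> b" and v: "valid_valuation n v" "consistent_ranking n v \<sigma>"
    and ij: "i < n" "j < n" and r: "probe_result v n b S (\<sigma> i) i r"
  shows "estimate n b S (\<sigma> i) r j \<le> v i j"
    "v i j - v i (\<sigma> i 0) / b ^ S \<le> b * estimate n b S (\<sigma> i) r j"
proof -
  define p where "p = inv_into {0..<n} (\<sigma> i) j"
  have bij: "bij_betw (\<sigma> i) {0..<n} {0..<n}" using v(2) ij(1) unfolding consistent_ranking_def by auto
  have p: "p < n" "\<sigma> i p = j"
    using bij_betw_inv_into_right[OF bij] bij_betwE[OF bij_betw_inv_into[OF bij]] ij(2)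
    unfolding p_def by auto
  have y: "fst r = v i (\<sigma> i 0)" using r unfolding probe_result_def by simp
  have "l \<le> S \<Longrightarrow> p < snd r l \<longleftrightarrow> fst r / b ^ l \<le> v i j" for l
    using r p unfolding probe_result_def by auto
  moreover have "0 \<le> v i j" using v(1) ij unfolding valid_valuation_def by simp
  moreover have "v i j \<le> fst r" using y consistent_ranking_top(2)[OF v(2) ij(1) ij(2)] by simp
  ultimately show "estimate n b S (\<sigma> i) r j \<le> v i j"
    "v i j - v i (\<sigma> i 0) / b ^ S \<le> b * estimate n b S (\<sigma> i) r j"
    using geometric_rounding[OF b, of "v i j" "fst r" S "\<lambda>l. p < snd r l"] y
    unfolding estimate_def Let_def p_def[symmetric] by auto
qed

definition top_item_alg :: "nat \<Rightarrow> (nat \<Rightarrow> nat \<Rightarrow> nat) \<Rightarrow> qalg" where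
  "top_item_alg n \<sigma> = seq_all (\<lambda>i. Query i (\<sigma> i 0)) n
     (\<lambda>R. Output (let a = SOME a. a < n \<and> (\<forall>i<n. R i \<le> R a) in transpose a (\<sigma> a 0)))"

lemma achieves_top_item_alg:
  assumes "0 < n"
  shows "achieves n (top_item_alg n) (real n) 1"
  unfolding achieves_def
proof (intro allI impI)
  fix v \<sigma> assume "valid_valuation n v \<and> consistent_ranking n v \<sigma>"
  then have val: "valid_valuation n v" and con: "consistent_ranking n v \<sigma>" by auto
  have "realises v (seq_all (\<lambda>i. Query i (\<sigma> i 0)) n) (\<lambda>R. \<forall>l<n. R l = v l (\<sigma> l 0)) (\<lambda>_. 1)"
    by (rule realises_seq_all_agents) (rule realises_single_Query)
  then obtain R where R: "\<forall>l<n. R l = v l (\<sigma> l 0)"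
    and run: "run (top_item_alg n \<sigma>) v =
                (let a = SOME a. a < n \<and> (\<forall>i<n. R i \<le> R a) in transpose a (\<sigma> a 0))"
    and queries: "\<And>j. queries_to (top_item_alg n \<sigma>) v j \<le> 1"
    unfolding top_item_alg_def
    by (rule realises_Output[where f = "\<lambda>R. let a = SOME a. a < n \<and> (\<forall>i<n. R i \<le> R a) in transpose a (\<sigma> a 0)"]) blast
  define a where "a = (SOME a. a < n \<and> (\<forall>i<n. R i \<le> R a))"
  have "\<exists>a. a < n \<and> (\<forall>i<n. R i \<le> R a)"
  proof -
    obtain a where "a \<in> {..<n}" "R a = Max (R ` {..<n})"
      using Max_in[of "R ` {..<n}"] assms by fastforce
    then show ?thesis by (intro exI[of _ a]) auto
  qed
  then have "a < n \<and> (\<forall>i<n. R i \<le> R a)" unfolding a_def by (rule someI_ex)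
  then have a: "a < n" "\<forall>i<n. R i \<le> R a" by auto
  have M: "is_matching n (transpose a (\<sigma> a 0))"
    using is_matching_transpose a(1) consistent_ranking_top(1)[OF con a(1)] by blast
  have "opt_welfare n v \<le> (\<Sum>i<n. v i (\<sigma> i 0))"
    by (rule opt_welfare_le_sum_bounds) (rule consistent_ranking_top(2)[OF con])
  also have "\<dots> \<le> real n * v a (\<sigma> a 0)"
    using sum_bounded_above[of "{..<n}" "\<lambda>i. v i (\<sigma> i 0)" "v a (\<sigma> a 0)"] a R by simp
  also have "\<dots> \<le> real n * social_welfare n v (transpose a (\<sigma> a 0))"
    using value_le_social_welfare[OF val M a(1)] by (simp add: mult_left_mono)
  finally show "is_matching n (run (top_item_alg n \<sigma>) v) \<and>
      opt_welfare n v \<le> real n * social_welfare n v (run (top_item_alg n \<sigma>) v) \<and>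
      (\<forall>j. real (queries_to (top_item_alg n \<sigma>) v j) \<le> 1)"
    using M run queries unfolding a_def[symmetric] by simp
qed

definition threshold_alg :: "nat \<Rightarrow> real \<Rightarrow> nat \<Rightarrow> (nat \<Rightarrow> nat \<Rightarrow> nat) \<Rightarrow> qalg" where
  "threshold_alg n b S \<sigma> = seq_all (\<lambda>i. agent_probe n b S (\<sigma> i) i) n
     (\<lambda>R. Output (max_weight_matching n (\<lambda>i. estimate n b S (\<sigma> i) (R i))))"

lemma achieves_threshold_alg:
  assumes b: "1 \<le> b" and bS: "2 * real n \<le> b ^ S" and L: "n < 2 ^ L"
  shows "achieves n (threshold_alg n b S) (2 * b) (Suc (Suc S * L))"
  unfolding achieves_def
proof (intro allI impI)
  fix v \<sigma> assume "valid_valuation n v \<and> consistent_ranking n v \<sigma>"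
  then have val: "valid_valuation n v" and con: "consistent_ranking n v \<sigma>" by auto
  have "realises v (seq_all (\<lambda>i. agent_probe n b S (\<sigma> i) i) n)
          (\<lambda>R. \<forall>l<n. probe_result v n b S (\<sigma> l) l (R l)) (\<lambda>_. Suc (Suc S * L))"
    using con L unfolding consistent_ranking_def
    by (intro realises_seq_all_agents realises_agent_probe) auto
  then obtain R where R: "\<forall>l<n. probe_result v n b S (\<sigma> l) l (R l)"
    and run: "run (threshold_alg n b S \<sigma>) v = max_weight_matching n (\<lambda>i. estimate n b S (\<sigma> i) (R i))"
    and queries: "\<And>j. queries_to (threshold_alg n b S \<sigma>) v j \<le> Suc (Suc S * L)"
    unfolding threshold_alg_def
    by (rule realises_Output[where f = "\<lambda>R. max_weight_matching n (\<lambda>i. estimate n b S (\<sigma> i) (R i))"]) blast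
  define M where "M = max_weight_matching n (\<lambda>i. estimate n b S (\<sigma> i) (R i))"
  have "opt_welfare n v - (\<Sum>i<n. v i (\<sigma> i 0) / b ^ S) \<le> b * social_welfare n v M"
    unfolding M_def using estimate_approx[OF b val con] R b
    by (intro max_weight_matching_approx) auto
  moreover have "(\<Sum>i<n. v i (\<sigma> i 0) / b ^ S) \<le> opt_welfare n v / 2"
    using b bS consistent_ranking_top(1)[OF con] by (intro sum_div_le_half_opt_welfare[OF val]) auto
  ultimately have "opt_welfare n v \<le> 2 * b * social_welfare n v M" by linarith
  then show "is_matching n (run (threshold_alg n b S \<sigma>) v) \<and>
      opt_welfare n v \<le> 2 * b * social_welfare n v (run (threshold_alg n b S \<sigma>) v) \<and>
      (\<forall>j. real (queries_to (threshold_alg n b S \<sigma>) v j) \<le> real (Suc (Suc S * L)))"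
    using run queries max_weight_matching(1) unfolding M_def by (simp del: of_nat_Suc)
qed

lemma achieves_mono:
  assumes "achieves n A d q" "d \<le> d'" "q \<le> q'"
  shows "achieves n A d' q'"
  unfolding achieves_def
proof (intro allI impI)
  fix v \<sigma> assume a: "valid_valuation n v \<and> consistent_ranking n v \<sigma>"
  then have M: "is_matching n (run (A \<sigma>) v)"
    and opt: "opt_welfare n v \<le> d * social_welfare n v (run (A \<sigma>) v)"
    and q: "\<forall>i. real (queries_to (A \<sigma>) v i) \<le> q"
    using assms(1) unfolding achieves_def by auto
  have "d * social_welfare n v (run (A \<sigma>) v) \<le> d' * social_welfare n v (run (A \<sigma>) v)"
    using assms(2) social_welfare_nonneg[OF _ M] a by (simp add: mult_right_mono)
  then show "is_matching n (run (A \<sigma>) v) \<and> opt_welfare n v \<le> d' * social_welfare n v (run (A \<sigma>) v) \<and>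
      (\<forall>i. real (queries_to (A \<sigma>) v i) \<le> q')"
    using M opt q assms(3) by (meson order_trans)
qed

section \<open>Asymptotic bounds\<close>

lemma ln_ge_half: "2 \<le> n \<Longrightarrow> 1 / 2 \<le> ln (real n)"
proof -
  assume "2 \<le> n"
  have "exp (1 / 2) \<le> real n" using exp_half_le2 \<open>2 \<le> n\<close> by linarith
  then have "ln (exp (1 / 2)) \<le> ln (real n)" using \<open>2 \<le> n\<close> by (subst ln_le_cancel_iff) auto
  then show ?thesis by simp
qed

lemma floorlog_2_le_ln: "2 \<le> n \<Longrightarrow> real (floorlog 2 n) \<le> 4 * ln (real n)"
proof -
  assume n: "2 \<le> n"
  have "real (floorlog 2 n) = of_int \<lfloor>log 2 (real n)\<rfloor> + 1"
    using n by (simp add: floorlog_def)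
  also have "\<dots> \<le> ln (real n) / ln 2 + 1" by (simp add: log_def)
  also have "\<dots> \<le> 2 * ln (real n) + 2 * ln (real n)"
  proof -
    have "ln (real n) * 1 \<le> ln (real n) * (2 * ln 2)"
      using ln_ge_half[OF n] ln_ge_half[of 2] by (intro mult_left_mono) auto
    then have "ln (real n) / ln 2 \<le> 2 * ln (real n)" by (simp add: pos_divide_le_eq)
    then show ?thesis using ln_ge_half[OF n] by simp
  qed
  finally show ?thesis by simp
qed

lemma linear_distortion_one_query:
  "\<exists>(C::real) (N::nat) (A :: nat \<Rightarrow> (nat \<Rightarrow> nat \<Rightarrow> nat) \<Rightarrow> qalg).
     \<forall>n\<ge>N. achieves n (A n) (C * real n) 1"
  using achieves_top_item_alg by (intro exI[of _ 1] exI[of _ 1] exI[of _ top_item_alg]) simp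

lemma root_distortion_log_queries:
  assumes k: "1 \<le> k"
  shows "\<exists>(C::real) (D::real) (N::nat) (A :: nat \<Rightarrow> (nat \<Rightarrow> nat \<Rightarrow> nat) \<Rightarrow> qalg).
           \<forall>n\<ge>N. achieves n (A n) (C * real n powr (1 / real k)) (D * ln (real n))"
proof (intro exI allI impI)
  fix n :: nat assume n: "2 ^ k \<le> n"
  define b where "b = real n powr (1 / real k)"
  define L where "L = floorlog 2 n"
  have n2: "2 \<le> n" using n k order_trans[OF _ n, of 2] by (simp add: self_le_power)
  have bk: "b ^ k = real n" using n2 k by (simp add: b_def powr_power)
  have b: "2 \<le> b"
  proof -
    have "(2::real) ^ k \<le> b ^ k" using n bk by (metis of_nat_le_iff of_nat_numeral of_nat_power)
    then show ?thesis using k power_mono_iff[of 2 b k] by (simp add: b_def)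
  qed
  have "2 * real n \<le> b ^ Suc k" using b bk by (simp add: mult_right_mono)
  moreover have "n < 2 ^ L" using floorlog_bounds[of n 2] n2 unfolding L_def by simp
  ultimately have "achieves n (threshold_alg n b (Suc k)) (2 * b) (Suc (Suc (Suc k) * L))"
    using b by (intro achieves_threshold_alg) auto
  moreover have "real (Suc (Suc (Suc k) * L)) \<le> (2 + 4 * (real k + 2)) * ln (real n)"
  proof -
    have "(real k + 2) * real L \<le> (real k + 2) * (4 * ln (real n))"
      using floorlog_2_le_ln[OF n2] unfolding L_def by (simp add: mult_left_mono)
    then show ?thesis using ln_ge_half[OF n2] by (simp add: algebra_simps)
  qed
  ultimately show "achieves n (threshold_alg n (real n powr (1 / real k)) (Suc k))
      (2 * real n powr (1 / real k)) ((2 + 4 * (real k + 2)) * ln (real n))"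
    unfolding b_def by (rule achieves_mono[OF _ order.refl])
qed

lemma constant_distortion_log_squared_queries:
  "\<exists>(C::real) (D::real) (N::nat) (A :: nat \<Rightarrow> (nat \<Rightarrow> nat \<Rightarrow> nat) \<Rightarrow> qalg).
     \<forall>n\<ge>N. achieves n (A n) C (D * (ln (real n))\<^sup>2)"
proof (intro exI allI impI)
  fix n :: nat assume n: "2 \<le> n"
  define L where "L = floorlog 2 n"
  define x where "x = ln (real n)"
  have L: "n < 2 ^ L" using floorlog_bounds[of n 2] n unfolding L_def by simp
  then have "2 * real n \<le> 2 ^ Suc L" by simp
  then have "achieves n (threshold_alg n 2 (Suc L)) (2 * 2) (Suc (Suc (Suc L) * L))"
    using L by (intro achieves_threshold_alg) auto
  moreover have "real (Suc (Suc (Suc L) * L)) \<le> 36 * x\<^sup>2"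
  proof -
    have x: "1 / 2 \<le> x" "real L \<le> 4 * x"
      using ln_ge_half[OF n] floorlog_2_le_ln[OF n] unfolding x_def L_def by auto
    then have "(real L + 2) * real L \<le> (8 * x) * (4 * x)" by (intro mult_mono) auto
    moreover have "1 \<le> (2 * x)\<^sup>2" using x(1) by (intro one_le_power) simp
    ultimately show ?thesis by (simp add: algebra_simps power2_eq_square)
  qed
  ultimately show "achieves n (threshold_alg n 2 (Suc (floorlog 2 n))) (2 * 2) (36 * (ln (real n))\<^sup>2)"
    unfolding x_def L_def by (rule achieves_mono[OF _ order.refl])
qed

theorem mainTheorem3:
  shows "(\<exists>(C::real) (N::nat) (A :: nat \<Rightarrow> (nat \<Rightarrow> nat \<Rightarrow> nat) \<Rightarrow> qalg).
            \<forall>n\<ge>N. achieves n (A n) (C * real n) 1)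
       \<and> (\<forall>k::nat. k \<ge> 1 \<longrightarrow>
            (\<exists>(C::real) (D::real) (N::nat) (A :: nat \<Rightarrow> (nat \<Rightarrow> nat \<Rightarrow> nat) \<Rightarrow> qalg).
               \<forall>n\<ge>N. achieves n (A n) (C * real n powr (1 / real k)) (D * ln (real n))))
       \<and> (\<exists>(C::real) (D::real) (N::nat) (A :: nat \<Rightarrow> (nat \<Rightarrow> nat \<Rightarrow> nat) \<Rightarrow> qalg).
            \<forall>n\<ge>N. achieves n (A n) C (D * (ln (real n))\<^sup>2))"
  using linear_distortion_one_query root_distortion_log_queries
    constant_distortion_log_squared_queries by blast

end
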